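(* Let $S(x)=\frac12\Big(1+\frac{\sinh(2x)}{2x}-2\Big(\frac{\sinh x}{x}\Big)^2-\frac{2x^4}{45}\Big)$. Then for all $0<x\le\frac32$, $$S(x)\le\frac{x^6}{270}.$$ *)

theory Defs
  imports Complex_Main
begin

definition S :: "real \<Rightarrow> real" where
  "S x = (1/2) * (1 + sinh (2*x) / (2*x) - 2 * (sinh x / x)^2 - 2 * x^4 / 45)"

end

theory Submission
  imports Defs
begin

text \<open>With \<open>y = 2x\<close> one has \<open>S x = R y / (8 x\<^sup>2)\<close>, where
  \<open>R y = y sinh y - 4 cosh y + 4 + y\<^sup>2 - y\<^sup>6/360 = (\<Sum>n\<ge>8, n even. (n - 4) y\<^sup>n / n!)\<close>
  is what remains of the power series of \<open>y sinh y - 4 cosh y\<close> after its first terms cancel.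
  All coefficients of \<open>R y / y\<^sup>8\<close> are nonnegative, so \<open>R y \<le> (y/3)\<^sup>8 R 3\<close> for \<open>0 \<le> y \<le> 3\<close>.
  Finally \<open>R 3 = 439/40 - (e\<^sup>2 + 7)/(2e)\<close> with \<open>e = exp 3\<close>, and the bound
  \<open>R 3 \<le> 3\<^sup>8/8640\<close> (tight to about 0.2%) follows from the Taylor lower bound
  \<open>exp 3 > 20.083\<close>.\<close>

definition sinh_cosh_remainder :: "real \<Rightarrow> real" where
  "sinh_cosh_remainder y = y * sinh y - 4 * cosh y + 4 + y^2 - y^6 / 360"

definition sinh_cosh_coeff :: "nat \<Rightarrow> real" where
  "sinh_cosh_coeff n = (if even n then (real n - 4) / fact n else 0)"

lemma mult_sinh_sums:
  fixes y :: real
  shows "(\<lambda>n. if even n then real n * y^n / fact n else 0) sums (y * sinh y)"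
proof -
  have "(\<lambda>n. y * (if even n then 0 else y^n /\<^sub>R fact n)) sums (y * sinh y)"
    by (rule sums_mult[OF sinh_converges])
  moreover have "y * (if even n then 0 else y^n /\<^sub>R fact n)
      = (if even (Suc n) then real (Suc n) * y ^ Suc n / fact (Suc n) else 0)" for n
    by (simp add: divide_simps)
  ultimately show ?thesis
    using sums_Suc_iff[where f = "\<lambda>n. if even n then real n * y^n / fact n else 0"] by simp
qed

lemma sinh_cosh_coeff_sums:
  fixes y :: real
  shows "(\<lambda>n. sinh_cosh_coeff n * y^n) sums (y * sinh y - 4 * cosh y)"
proof -
  have "(\<lambda>n. (if even n then real n * y^n / fact n else 0)
          - 4 * (if even n then y^n /\<^sub>R fact n else 0)) sums (y * sinh y - 4 * cosh y)"
    by (intro sums_diff mult_sinh_sums sums_mult cosh_converges)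
  also have "(\<lambda>n. (if even n then real n * y^n / fact n else 0)
          - 4 * (if even n then y^n /\<^sub>R fact n else 0)) = (\<lambda>n. sinh_cosh_coeff n * y^n)"
    by (auto simp: fun_eq_iff sinh_cosh_coeff_def field_simps)
  finally show ?thesis .
qed

lemma sinh_cosh_remainder_sums:
  fixes y :: real
  shows "(\<lambda>m. sinh_cosh_coeff (m + 8) * y^(m + 8)) sums sinh_cosh_remainder y"
proof -
  have "(\<Sum>n<8. sinh_cosh_coeff n * y^n) = -4 - y^2 + y^6 / 360"
    by (simp add: lessThan_nat_numeral sinh_cosh_coeff_def fact_numeral)
  with sums_split_initial_segment[OF sinh_cosh_coeff_sums[of y], of 8] show ?thesis
    by (simp add: sinh_cosh_remainder_def algebra_simps)
qed

lemma sinh_cosh_remainder_le_scaled: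
  assumes "0 \<le> y" "y \<le> z"
  shows "sinh_cosh_remainder y \<le> (y / z)^8 * sinh_cosh_remainder z"
proof -
  have power_le: "y^(m + 8) \<le> (y / z)^8 * z^(m + 8)" for m
  proof (cases "z = 0")
    case False
    have "y^(m + 8) = y^8 * y^m"
      by (simp add: power_add)
    also have "\<dots> \<le> y^8 * z^m"
      using assms by (simp add: mult_left_mono power_mono)
    also have "\<dots> = (y / z)^8 * z^(m + 8)"
      using False by (simp add: power_add power_divide)
    finally show ?thesis .
  qed (use assms in \<open>simp add: power_0_left\<close>)
  have termwise: "sinh_cosh_coeff (m + 8) * y^(m + 8)
      \<le> (y / z)^8 * (sinh_cosh_coeff (m + 8) * z^(m + 8))" for m
    using mult_left_mono[OF power_le, of "sinh_cosh_coeff (m + 8)" m]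
    by (simp add: sinh_cosh_coeff_def mult.left_commute)
  show ?thesis
    by (rule sums_le[OF termwise sinh_cosh_remainder_sums sums_mult[OF sinh_cosh_remainder_sums]])
qed

lemma exp_ge_Taylor_partial_sum:
  fixes x :: real
  assumes "0 \<le> x"
  shows "(\<Sum>k<n. x^k / fact k) \<le> exp x"
  using sum_le_suminf[OF sums_summable[OF exp_converges], of "{..<n}" x]
    sums_unique[OF exp_converges, of x] assms
  by (simp add: divide_inverse mult.commute)

lemma exp_3_gt: "20083 / 1000 < exp (3::real)"
proof -
  have "20083 / 1000 < (\<Sum>k<12. 3^k / fact k :: real)"
    by (simp add: lessThan_nat_numeral fact_numeral)
  also have "\<dots> \<le> exp 3"
    by (rule exp_ge_Taylor_partial_sum) simp
  finally show ?thesis .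
qed

lemma sinh_cosh_remainder_3: "sinh_cosh_remainder 3 \<le> 3^8 / 8640"
proof -
  define e where "e = exp (3::real)"
  define a :: real where "a = 20083 / 1000"
  \<comment> \<open>\<open>a\<close> lies just above the larger root \<open>20.0827...\<close> of \<open>t\<^sup>2 - 3269/160 t + 7\<close>\<close>
  have e: "a < e" "0 < e"
    using exp_3_gt by (simp_all only: a_def e_def exp_gt_zero)
  have "sinh_cosh_remainder 3 = 439 / 40 - (e^2 + 7) / (2 * e)"
    using e by (simp add: sinh_cosh_remainder_def sinh_def cosh_def e_def exp_minus
        field_simps power2_eq_square)
  moreover have "3269 / 320 * (2 * e) \<le> e^2 + 7"
  proof -
    have "e^2 + 7 - 3269 / 160 * e = (e - a) * (e + a - 3269 / 160) + (a^2 - 3269 / 160 * a + 7)"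
      by (simp add: field_simps power2_eq_square)
    moreover have "0 \<le> (e - a) * (e + a - 3269 / 160)" "0 < a^2 - 3269 / 160 * a + 7"
      using e by (simp_all add: a_def power2_eq_square)
    ultimately show ?thesis
      by linarith
  qed
  then have "3269 / 320 \<le> (e^2 + 7) / (2 * e)"
    using e by (simp add: pos_le_divide_eq)
  ultimately show ?thesis
    by simp
qed

lemma sinh_cosh_remainder_le:
  assumes "0 \<le> y" "y \<le> 3"
  shows "sinh_cosh_remainder y \<le> y^8 / 8640"
proof -
  have "sinh_cosh_remainder y \<le> (y / 3)^8 * sinh_cosh_remainder 3"
    using assms by (rule sinh_cosh_remainder_le_scaled)
  also have "\<dots> \<le> (y / 3)^8 * (3^8 / 8640)"
    using assms by (intro mult_left_mono sinh_cosh_remainder_3) simp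
  also have "\<dots> = y^8 / 8640"
    by (simp add: power_divide)
  finally show ?thesis .
qed

lemma S_eq_sinh_cosh_remainder:
  assumes "x \<noteq> 0"
  shows "S x = sinh_cosh_remainder (2 * x) / (8 * x^2)"
proof -
  have "sinh (2 * x) = 2 * sinh x * cosh x" "cosh (2 * x) = 1 + 2 * sinh x ^ 2"
    using sinh_double[of x] cosh_double[of x] cosh_square_eq[of x] by simp_all
  then show ?thesis
    using assms by (simp add: S_def sinh_cosh_remainder_def field_simps power2_eq_square eval_nat_numeral)
qed

theorem lemma2:
  fixes x :: real
  assumes "0 < x" and "x \<le> 3/2"
  shows "S x \<le> x^6 / 270"
proof -
  have "S x = sinh_cosh_remainder (2 * x) / (8 * x^2)"
    using assms by (simp add: S_eq_sinh_cosh_remainder)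
  also have "\<dots> \<le> ((2 * x)^8 / 8640) / (8 * x^2)"
    using assms by (intro divide_right_mono sinh_cosh_remainder_le) auto
  also have "\<dots> = x^6 / 270"
    using assms by (simp add: field_simps eval_nat_numeral)
  finally show ?thesis .
qed

end
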